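(* Let $\mathcal{F}=\{f_1,\dots,f_n\}$ be a basis for $\mathbb{R}^n$ and $\mathcal{F}^*=\{f_1^*,\dots,f_n^*\}$ its dual basis. Then: (i) If $M$ is a $k$-dimensional PR-subspace with respect to $\mathcal{F}$, then $|\mathrm{supp}_{\mathcal{F}^*}(x)|\ge k$ for every nonzero $x\in M$; consequently $M$ is maximal if there exists $x\in M$ with $|\mathrm{supp}_{\mathcal{F}^*}(x)|=k$. (ii) For every positive integer $k\le[(n+1)/2]$ and every vector $x\in\mathbb{R}^n$ with $|\mathrm{supp}_{\mathcal{F}^*}(x)|=k$, there exists a $k$-dimensional maximal PR-subspace $M$ with respect to $\mathcal{F}$ such that $x\in M$. (iii) If $k<[(n+1)/2]$ and $M$ is a $k$-dimensional PR-subspace with respect to $\mathcal{F}$, then $M$ is maximal if and only if there exists $x\in M$ with $|\mathrm{supp}_{\mathcal{F}^*}(x)|=k$.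
   Context: The dual basis $\{f_i^*\}$ is the unique basis with $\langle f_i^*,f_j\rangle=\delta_{ij}$. For $x=\sum_{i=1}^n c_if_i^*$, $\mathrm{supp}_{\mathcal{F}^*}(x)=\{i:c_i\neq0\}$. $[a]$ is the integer part of $a$. A subspace $M$ is a PR-subspace with respect to $\mathcal{F}$ if $\{P_Mf_i\}_{i=1}^n$ (with $P_M$ the orthogonal projection onto $M$) spans $M$ and whenever $x,y\in M$ satisfy $|\langle x,P_Mf_i\rangle|=|\langle y,P_Mf_i\rangle|$ for all $i$, then $x=\pm y$; it is maximal if it is not a proper subspace of another PR-subspace with respect to $\mathcal{F}$. *)

theory Defs
  imports "HOL-Analysis.Analysis"
begin

text \<open>A basis f_1..f_n of R^n, indexed by the finite type 'n (n = CARD('n)).\<close>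
definition is_basis :: "('n::finite \<Rightarrow> real^'n) \<Rightarrow> bool" where
  "is_basis f \<longleftrightarrow> inj f \<and> independent (range f) \<and> span (range f) = UNIV"

definition is_dual_basis :: "('n::finite \<Rightarrow> real^'n) \<Rightarrow> ('n \<Rightarrow> real^'n) \<Rightarrow> bool" where
  "is_dual_basis f fs \<longleftrightarrow> (\<forall>i j. inner (fs i) (f j) = (if i = j then 1 else 0))"

definition coeffs :: "('n::finite \<Rightarrow> real^'n) \<Rightarrow> real^'n \<Rightarrow> 'n \<Rightarrow> real" where
  "coeffs fs x = (THE c. x = (\<Sum>i\<in>UNIV. c i *\<^sub>R fs i))"

definition supp_dual :: "('n::finite \<Rightarrow> real^'n) \<Rightarrow> real^'n \<Rightarrow> 'n set" where
  "supp_dual fs x = {i. coeffs fs x i \<noteq> 0}"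

definition orth_proj :: "(real^'n::finite) set \<Rightarrow> real^'n \<Rightarrow> real^'n" where
  "orth_proj M v = (THE p. p \<in> M \<and> (\<forall>m\<in>M. inner (v - p) m = 0))"

definition PR_subspace :: "('n::finite \<Rightarrow> real^'n) \<Rightarrow> (real^'n) set \<Rightarrow> bool" where
  "PR_subspace f M \<longleftrightarrow> subspace M \<and>
     span (range (\<lambda>i. orth_proj M (f i))) = M \<and>
     (\<forall>x\<in>M. \<forall>y\<in>M. (\<forall>i. \<bar>inner x (orth_proj M (f i))\<bar> = \<bar>inner y (orth_proj M (f i))\<bar>)
        \<longrightarrow> x = y \<or> x = - y)"

definition maximal_PR_subspace :: "('n::finite \<Rightarrow> real^'n) \<Rightarrow> (real^'n) set \<Rightarrow> bool" where
  "maximal_PR_subspace f M \<longleftrightarrow> PR_subspace f M \<and>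
     \<not> (\<exists>M'. PR_subspace f M' \<and> M \<subset> M')"

end

theory Submission
  imports Defs
begin

(* For a subspace M, <x, P_M f_i> = <x, f_i> for x in M, so phase retrievability of M only
   depends on which of the numbers <x, f_i> vanish: M is a PR-subspace iff no two nonzero
   vectors of M have complementary zero sets. Part (i) follows: if x in M had fewer than
   dim M nonzero coefficients, the annihilator of those f_i would meet M in a nonzero vector
   with zero set complementary to x. For (ii) and (iii) subspaces are enlarged one generic
   vector v at a time: v avoids the finitely many proper subspaces C + annihilator f T, which
   guarantees span (insert v C) \<inter> annihilator f T \<subseteq> C. In (ii) this keeps every vector of
   C with at least k zero coefficients a multiple of x, which forces the complement property;
   in (iii) a PR-subspace without a vector of minimal support can be enlarged the same way. *)

section \<open>Orthogonal projections onto subspaces\<close>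

lemma orth_proj_spec:
  fixes M :: "(real^'n::finite) set"
  assumes "subspace M"
  shows "orth_proj M v \<in> M \<and> (\<forall>m\<in>M. inner (v - orth_proj M v) m = 0)"
proof -
  obtain y z where y: "y \<in> span M" and z: "\<And>w. w \<in> span M \<Longrightarrow> orthogonal z w"
    and v: "v = y + z"
    using orthogonal_subspace_decomp_exists by blast
  have yM: "y \<in> M" using y assms span_eq_iff by blast
  have y_spec: "y \<in> M \<and> (\<forall>m\<in>M. inner (v - y) m = 0)"
    using yM z v by (simp add: orthogonal_def span_base)
  have "p = y" if p: "p \<in> M \<and> (\<forall>m\<in>M. inner (v - p) m = 0)" for p
  proof -
    have "p - y \<in> M" using p yM assms by (simp add: subspace_diff)
    then have "inner (v - y) (p - y) - inner (v - p) (p - y) = 0" using p y_spec by simp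
    then have "inner (p - y) (p - y) = 0"
      by (simp add: inner_diff_left inner_diff_right inner_commute)
    then show ?thesis by simp
  qed
  then have "orth_proj M v = y"
    unfolding orth_proj_def using y_spec by (rule the_equality[rotated])
  then show ?thesis using y_spec by simp
qed

lemma inner_orth_proj:
  fixes M :: "(real^'n::finite) set"
  assumes "subspace M" "x \<in> M"
  shows "inner x (orth_proj M v) = inner x v"
proof -
  have "inner (v - orth_proj M v) x = 0" using orth_proj_spec[OF assms(1)] assms(2) by blast
  then show ?thesis by (simp add: inner_diff_left inner_diff_right inner_commute)
qed

lemma orthogonal_to_basis_imp_zero:
  fixes f :: "'n::finite \<Rightarrow> real^'n"
  assumes "is_basis f" "\<And>i. inner z (f i) = 0"
  shows "z = 0"
proof -
  have "orthogonal z w" if "w \<in> span (range f)" for w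
    using orthogonal_to_span[OF that, of z] assms(2) by (auto simp: orthogonal_def)
  then have "orthogonal z z" using assms(1) by (simp add: is_basis_def)
  then show ?thesis by (simp add: orthogonal_def)
qed

lemma span_orth_proj_basis:
  fixes f :: "'n::finite \<Rightarrow> real^'n"
  assumes "is_basis f" "subspace M"
  shows "span (range (\<lambda>i. orth_proj M (f i))) = M"
proof
  let ?S = "range (\<lambda>i. orth_proj M (f i))"
  show sub: "span ?S \<subseteq> M"
    using orth_proj_spec[OF assms(2)] assms(2) by (intro span_minimal) auto
  show "M \<subseteq> span ?S"
  proof
    fix m assume m: "m \<in> M"
    obtain y z where y: "y \<in> span ?S" and z: "\<And>w. w \<in> span ?S \<Longrightarrow> orthogonal z w"
      and m_eq: "m = y + z"
      using orthogonal_subspace_decomp_exists by blast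
    have zM: "z \<in> M" using m_eq m y sub assms(2)
      by (metis add_diff_cancel_left' subsetD subspace_diff)
    have "inner z (f i) = 0" for i
      using z[of "orth_proj M (f i)"] inner_orth_proj[OF assms(2) zM]
      by (simp add: orthogonal_def span_base)
    then have "z = 0" using orthogonal_to_basis_imp_zero[OF assms(1)] by blast
    then show "m \<in> span ?S" using m_eq y by simp
  qed
qed

section \<open>PR-subspaces and the complement property\<close>

definition complement_property :: "('n::finite \<Rightarrow> real^'n) \<Rightarrow> (real^'n) set \<Rightarrow> bool" where
  "complement_property f M \<longleftrightarrow>
     (\<forall>u\<in>M. \<forall>v\<in>M. (\<forall>i. inner u (f i) = 0 \<or> inner v (f i) = 0) \<longrightarrow> u = 0 \<or> v = 0)"

lemma PR_subspace_iff_complement_property: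
  fixes f :: "'n::finite \<Rightarrow> real^'n"
  assumes "is_basis f" "subspace M"
  shows "PR_subspace f M \<longleftrightarrow> complement_property f M"
proof -
  have proj: "inner x (orth_proj M (f i)) = inner x (f i)" if "x \<in> M" for x i
    using inner_orth_proj[OF assms(2) that] .
  have sum_diff: "u + v \<in> M" "u - v \<in> M" if "u \<in> M" "v \<in> M" for u v
    using that assms(2) by (auto intro: subspace_add subspace_diff)
  show ?thesis
  proof
    assume PR: "PR_subspace f M"
    show "complement_property f M"
      unfolding complement_property_def
    proof (intro ballI impI)
      fix u v assume u: "u \<in> M" and v: "v \<in> M"
        and compl: "\<forall>i. inner u (f i) = 0 \<or> inner v (f i) = 0"
      have "\<bar>inner (u + v) (orth_proj M (f i))\<bar> = \<bar>inner (u - v) (orth_proj M (f i))\<bar>" for i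
        unfolding proj[OF sum_diff(1)[OF u v]] proj[OF sum_diff(2)[OF u v]]
        using compl[rule_format, of i] by (auto simp: inner_add_left inner_diff_left)
      then have "u + v = u - v \<or> u + v = - (u - v)"
        using PR sum_diff[OF u v] unfolding PR_subspace_def by blast
      then have "2 *\<^sub>R v = 0 \<or> 2 *\<^sub>R u = 0" by (auto simp: scaleR_2 algebra_simps)
      then show "u = 0 \<or> v = 0" by auto
    qed
  next
    assume CP: "complement_property f M"
    have "x = y \<or> x = - y" if x: "x \<in> M" and y: "y \<in> M"
      and eq: "\<forall>i. \<bar>inner x (orth_proj M (f i))\<bar> = \<bar>inner y (orth_proj M (f i))\<bar>" for x y
    proof -
      have "inner (x + y) (f i) = 0 \<or> inner (x - y) (f i) = 0" for i
      proof -
        have "\<bar>inner x (f i)\<bar> = \<bar>inner y (f i)\<bar>" using eq proj[OF x] proj[OF y] by metis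
        then show ?thesis by (auto simp: inner_add_left inner_diff_left abs_if split: if_splits)
      qed
      then have "x + y = 0 \<or> x - y = 0"
        using CP sum_diff[OF x y] unfolding complement_property_def by blast
      then show ?thesis by (auto simp: algebra_simps add_eq_0_iff)
    qed
    then show "PR_subspace f M"
      unfolding PR_subspace_def using assms span_orth_proj_basis by blast
  qed
qed

lemma supp_dual_eq:
  fixes f fs :: "'n::finite \<Rightarrow> real^'n"
  assumes "is_basis f" "is_dual_basis f fs"
  shows "supp_dual fs x = {i. inner x (f i) \<noteq> 0}"
proof -
  let ?c = "\<lambda>i. inner x (f i)"
  have coeff: "inner (\<Sum>i\<in>UNIV. c i *\<^sub>R fs i) (f j) = c j" for c j
  proof -
    have "inner (\<Sum>i\<in>UNIV. c i *\<^sub>R fs i) (f j) = (\<Sum>i\<in>UNIV. if i = j then c j else 0)"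
      unfolding inner_sum_left
      by (rule sum.cong) (use assms(2) in \<open>auto simp: is_dual_basis_def\<close>)
    then show ?thesis by simp
  qed
  have "x - (\<Sum>i\<in>UNIV. ?c i *\<^sub>R fs i) = 0"
    by (rule orthogonal_to_basis_imp_zero[OF assms(1)]) (simp add: inner_diff_left coeff)
  then have expansion: "x = (\<Sum>i\<in>UNIV. ?c i *\<^sub>R fs i)" by simp
  have "coeffs fs x = ?c" unfolding coeffs_def
  proof (rule the_equality)
    fix c assume "x = (\<Sum>i\<in>UNIV. c i *\<^sub>R fs i)"
    then show "c = ?c" using coeff by (auto intro!: ext)
  qed (rule expansion)
  then show ?thesis by (simp add: supp_dual_def)
qed

section \<open>Annihilators and generic extensions\<close>

definition annihilator :: "('n::finite \<Rightarrow> real^'n) \<Rightarrow> 'n set \<Rightarrow> (real^'n) set" where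
  "annihilator f T = {u. \<forall>i\<in>T. inner u (f i) = 0}"

lemma subspace_annihilator: "subspace (annihilator f T)"
  unfolding annihilator_def subspace_def by (auto simp: inner_add_left)

lemma dim_annihilator:
  fixes f :: "'n::finite \<Rightarrow> real^'n"
  assumes "is_basis f"
  shows "dim (annihilator f T) + card T = CARD('n)"
proof -
  have "(\<forall>x \<in> span (f ` T). orthogonal x y) \<longleftrightarrow> (\<forall>i\<in>T. inner y (f i) = 0)" for y
  proof
    assume h: "\<forall>i\<in>T. inner y (f i) = 0"
    have "orthogonal y x" if "x \<in> span (f ` T)" for x
      using that by (rule orthogonal_to_span) (use h in \<open>auto simp: orthogonal_def\<close>)
    then show "\<forall>x \<in> span (f ` T). orthogonal x y" by (simp add: orthogonal_commute)
  qed (auto simp: orthogonal_def inner_commute span_base)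
  then have ann: "annihilator f T = {y \<in> UNIV. \<forall>x \<in> span (f ` T). orthogonal x y}"
    unfolding annihilator_def by auto
  have "independent (f ` T)" "inj_on f T"
    using assms unfolding is_basis_def by (meson image_mono independent_mono subset_UNIV inj_on_subset)+
  then have "dim (span (f ` T)) = card T"
    using dim_span_eq_card_independent card_image by metis
  moreover have "dim {y \<in> UNIV. \<forall>x \<in> span (f ` T). orthogonal x y} + dim (span (f ` T))
      = dim (UNIV :: (real^'n) set)"
    by (rule dim_subspace_orthogonal_to_vectors) (auto simp: subspace_span)
  ultimately show ?thesis using ann by simp
qed

lemma exists_not_in_proper_subspaces:
  fixes \<A> :: "'a::euclidean_space set set"
  assumes "finite \<A>" "\<And>A. A \<in> \<A> \<Longrightarrow> dim A < DIM('a)"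
  shows "\<exists>v. \<forall>A\<in>\<A>. v \<notin> A"
proof -
  have "negligible (\<Union>\<A>)"
    using assms by (intro negligible_Union negligible_lowdim) auto
  then have "\<Union>\<A> \<noteq> UNIV" using non_negligible_UNIV by metis
  then show ?thesis by blast
qed

lemma subspace_Int_nonzero:
  fixes A B :: "'a::euclidean_space set"
  assumes "subspace A" "subspace B" "DIM('a) < dim A + dim B"
  shows "\<exists>v\<in>A \<inter> B. v \<noteq> 0"
proof (rule ccontr)
  assume "\<not> ?thesis"
  then have "A \<inter> B \<subseteq> {0}" by blast
  then have "dim (A \<inter> B) = 0" by (simp add: dim_eq_0)
  moreover have "dim {x + y |x y. x \<in> A \<and> y \<in> B} \<le> DIM('a)" by (rule dim_subset_UNIV)
  ultimately show False using dim_sums_Int[OF assms(1,2)] assms(3) by linarith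
qed

lemma span_insert_Int_subset:
  fixes C Z :: "'a::real_vector set"
  assumes "subspace C" "subspace Z" "v \<notin> {x + y |x y. x \<in> C \<and> y \<in> Z}"
  shows "span (insert v C) \<inter> Z \<subseteq> C"
proof
  fix w assume w: "w \<in> span (insert v C) \<inter> Z"
  then obtain a where "w - a *\<^sub>R v \<in> span C" using span_breakdown_eq by blast
  then have aC: "w - a *\<^sub>R v \<in> C" using assms(1) span_eq_iff by blast
  show "w \<in> C"
  proof (cases "a = 0")
    case True
    then show ?thesis using aC by simp
  next
    case False
    have "v = (- (1/a)) *\<^sub>R (w - a *\<^sub>R v) + (1/a) *\<^sub>R w"
      using False by (simp add: scaleR_diff_right)
    moreover have "(- (1/a)) *\<^sub>R (w - a *\<^sub>R v) \<in> C" using assms(1) aC by (rule subspace_scale)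
    moreover have "(1/a) *\<^sub>R w \<in> Z" using assms(2) w by (simp add: subspace_scale)
    ultimately show ?thesis using assms(3) by blast
  qed
qed

text \<open>The sums C + annihilator f T are proper subspaces, so a generic v avoids all of them.\<close>

lemma exists_extension_avoiding_annihilators:
  fixes f :: "'n::finite \<Rightarrow> real^'n"
  assumes "is_basis f" "subspace C" "dim C < CARD('n)" "\<And>T. T \<in> \<T> \<Longrightarrow> dim C < card T"
  shows "\<exists>v. v \<notin> C \<and> (\<forall>T\<in>\<T>. span (insert v C) \<inter> annihilator f T \<subseteq> C)"
proof -
  let ?sum = "\<lambda>T. {x + y |x y. x \<in> C \<and> y \<in> annihilator f T}"
  have "dim (?sum T) < CARD('n)" if "T \<in> \<T>" for T
  proof -
    have "dim (?sum T) \<le> dim C + dim (annihilator f T)"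
      using dim_sums_Int[OF assms(2) subspace_annihilator[of f T]] by linarith
    then show ?thesis using dim_annihilator[OF assms(1), of T] assms(4)[OF that] by linarith
  qed
  then obtain v where v: "\<forall>A \<in> insert C (?sum ` \<T>). v \<notin> A"
    using exists_not_in_proper_subspaces[of "insert C (?sum ` \<T>)"] assms(3) by auto
  then show ?thesis
    using span_insert_Int_subset[OF assms(2) subspace_annihilator] by blast
qed

lemma dim_le_card_support:
  fixes f :: "'n::finite \<Rightarrow> real^'n"
  assumes "is_basis f" "PR_subspace f M" "x \<in> M" "x \<noteq> 0"
  shows "dim M \<le> card {i. inner x (f i) \<noteq> 0}"
proof (rule ccontr)
  let ?S = "{i. inner x (f i) \<noteq> 0}"
  assume small: "\<not> dim M \<le> card ?S"
  have M: "subspace M" using assms(2) unfolding PR_subspace_def by blast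
  have "CARD('n) < dim M + dim (annihilator f ?S)"
    using dim_annihilator[OF assms(1), of ?S] small by linarith
  then obtain v where v: "v \<in> M" "v \<in> annihilator f ?S" "v \<noteq> 0"
    using subspace_Int_nonzero[OF M subspace_annihilator] by auto
  have "\<forall>i. inner x (f i) = 0 \<or> inner v (f i) = 0" using v(2) unfolding annihilator_def by auto
  then show False
    using assms v PR_subspace_iff_complement_property[OF assms(1) M]
    unfolding complement_property_def by blast
qed

lemma maximal_PR_subspace_if_card_support_eq_dim:
  fixes f :: "'n::finite \<Rightarrow> real^'n"
  assumes "is_basis f" "PR_subspace f M" "x \<in> M" "card {i. inner x (f i) \<noteq> 0} = dim M"
    "1 \<le> dim M"
  shows "maximal_PR_subspace f M"
proof -
  have "{i. inner x (f i) \<noteq> 0} \<noteq> {}" using assms(4,5) by (metis card.empty not_one_le_zero)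
  then have "x \<noteq> 0" by auto
  have "\<not> (PR_subspace f M' \<and> M \<subset> M')" for M'
  proof
    assume M': "PR_subspace f M' \<and> M \<subset> M'"
    then have "subspace M" "subspace M'"
      using assms(2) unfolding PR_subspace_def by blast+
    then have "span M \<subset> span M'" using M' by (metis span_eq_iff)
    then have "dim M < dim M'" by (rule dim_psubset)
    moreover have "dim M' \<le> card {i. inner x (f i) \<noteq> 0}"
      using dim_le_card_support[OF assms(1)] M' assms(3) \<open>x \<noteq> 0\<close> by blast
    ultimately show False using assms(4) by linarith
  qed
  then show ?thesis unfolding maximal_PR_subspace_def using assms(2) by blast
qed

lemma exists_subspace_sparse_vectors_in_line:
  fixes f :: "'n::finite \<Rightarrow> real^'n"
  assumes "is_basis f" "x \<noteq> 0" "1 \<le> m" "m \<le> CARD('n)"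
  shows "\<exists>C. subspace C \<and> dim C = m \<and> x \<in> C \<and>
    (\<forall>T. m \<le> card T \<longrightarrow> C \<inter> annihilator f T \<subseteq> span {x})"
  using assms(3,4)
proof (induction m rule: dec_induct)
  case base
  have "dim (span {x}) = 1" using assms(2) by (simp add: dim_insert)
  then show ?case by (intro exI[of _ "span {x}"]) (auto simp: span_base)
next
  case (step m)
  then obtain C where C: "subspace C" "dim C = m" "x \<in> C"
    "\<forall>T. m \<le> card T \<longrightarrow> C \<inter> annihilator f T \<subseteq> span {x}" by auto
  obtain v where v: "v \<notin> C"
    "\<forall>T \<in> {T. Suc m \<le> card T}. span (insert v C) \<inter> annihilator f T \<subseteq> C"
    using exists_extension_avoiding_annihilators[OF assms(1) C(1), of "{T. Suc m \<le> card T}"]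
      C(2) step.prems by auto
  have "span C = C" using C(1) by (rule span_eq_iff[THEN iffD2])
  have "dim (span (insert v C)) = Suc m" using v(1) C(2) by (simp add: dim_insert \<open>span C = C\<close>)
  moreover have "span (insert v C) \<inter> annihilator f T \<subseteq> span {x}" if "Suc m \<le> card T" for T
  proof -
    have "m \<le> card T" using that by simp
    then show ?thesis using v(2) C(4) that by blast
  qed
  ultimately show ?case using C(3)
    by (intro exI[of _ "span (insert v C)"]) (auto simp: span_base)
qed

lemma exists_maximal_PR_subspace_through:
  fixes f :: "'n::finite \<Rightarrow> real^'n"
  assumes f: "is_basis f" and k: "0 < k" "2 * k \<le> CARD('n) + 1"
    and supp_x: "card {i. inner x (f i) \<noteq> 0} = k"
  shows "\<exists>M. subspace M \<and> dim M = k \<and> maximal_PR_subspace f M \<and> x \<in> M"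
proof -
  have "x \<noteq> 0" using supp_x k by auto
  have "k \<le> CARD('n)" using supp_x card_mono[of UNIV "{i. inner x (f i) \<noteq> 0}"] by simp
  moreover have "1 \<le> k" using k by simp
  ultimately obtain C where C: "subspace C" "dim C = k" "x \<in> C"
      "\<forall>T. k \<le> card T \<longrightarrow> C \<inter> annihilator f T \<subseteq> span {x}"
    using exists_subspace_sparse_vectors_in_line[OF f \<open>x \<noteq> 0\<close>] by blast
  have multiple: "\<exists>a. a \<noteq> 0 \<and> u = a *\<^sub>R x"
    if "u \<in> C" "u \<noteq> 0" "k \<le> card {i. inner u (f i) = 0}" for u
  proof -
    have "u \<in> span {x}" using C(4) that by (auto simp: annihilator_def)
    then show ?thesis using that(2) by (auto simp: span_singleton)
  qed
  have "complement_property f C"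
    unfolding complement_property_def
  proof (intro ballI impI)
    fix u v assume u: "u \<in> C" and v: "v \<in> C"
      and compl: "\<forall>i. inner u (f i) = 0 \<or> inner v (f i) = 0"
    show "u = 0 \<or> v = 0"
    proof (rule ccontr)
      assume nz: "\<not> (u = 0 \<or> v = 0)"
      have "{i. inner u (f i) = 0} \<union> {i. inner v (f i) = 0} = UNIV" using compl by blast
      then have "CARD('n) \<le> card {i. inner u (f i) = 0} + card {i. inner v (f i) = 0}"
        by (metis card_Un_le)
      then have "k \<le> card {i. inner u (f i) = 0} \<or> k \<le> card {i. inner v (f i) = 0}"
        using k by linarith
      then obtain p q where pq: "{p, q} = {u, v}" "k \<le> card {i. inner p (f i) = 0}" by blast
      then have "p \<in> C" "q \<in> C" "p \<noteq> 0" "q \<noteq> 0" using u v nz by auto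
      then obtain a where a: "a \<noteq> 0" "p = a *\<^sub>R x" using multiple pq(2) by blast
      have compl': "\<forall>i. inner p (f i) = 0 \<or> inner q (f i) = 0"
        using compl pq(1) by (auto simp: doubleton_eq_iff)
      then have "{i. inner x (f i) \<noteq> 0} \<subseteq> {i. inner q (f i) = 0}" using a by auto
      then have "k \<le> card {i. inner q (f i) = 0}" using supp_x card_mono[OF finite] by metis
      then obtain b where b: "b \<noteq> 0" "q = b *\<^sub>R x" using multiple \<open>q \<in> C\<close> \<open>q \<noteq> 0\<close> by blast
      obtain i where "inner x (f i) \<noteq> 0" using supp_x k by fastforce
      then show False using compl' a b by auto
    qed
  qed
  then have "PR_subspace f C" using PR_subspace_iff_complement_property[OF f C(1)] by blast
  then have "maximal_PR_subspace f C"
    using maximal_PR_subspace_if_card_support_eq_dim[OF f _ C(3)] supp_x C(2) k by simp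
  then show ?thesis using C by blast
qed

lemma not_maximal_PR_subspace_if_no_min_support:
  fixes f :: "'n::finite \<Rightarrow> real^'n"
  assumes f: "is_basis f" and PR: "PR_subspace f M" and dim_M: "dim M = k"
    and k: "2 * k + 1 \<le> CARD('n)"
    and no_min: "\<not> (\<exists>x\<in>M. card {i. inner x (f i) \<noteq> 0} = k)"
  shows "\<not> maximal_PR_subspace f M"
proof -
  have M: "subspace M" using PR unfolding PR_subspace_def by blast
  have CP: "complement_property f M"
    using PR PR_subspace_iff_complement_property[OF f M] by blast
  have big: "k < card {i. inner y (f i) \<noteq> 0}" if "y \<in> M" "y \<noteq> 0" for y
    using dim_le_card_support[OF f PR that] no_min that(1) dim_M by fastforce
  have split: "\<exists>T. (T = S \<or> T = - S) \<and> k < card T \<and> M \<inter> annihilator f T \<subseteq> {0}" for S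
  proof (cases "M \<inter> annihilator f S \<subseteq> {0}")
    case trivial: True
    show ?thesis
    proof (cases "k < card S")
      case False
      have "card (- S) = CARD('n) - card S" by (simp add: Compl_eq_Diff_UNIV card_Diff_subset)
      then have "k < card (- S)" using False k by linarith
      moreover have "z = 0" if "z \<in> M" "z \<in> annihilator f (- S)" for z
      proof (rule ccontr)
        assume "z \<noteq> 0"
        have "card {i. inner z (f i) \<noteq> 0} \<le> card S"
          by (rule card_mono[OF finite]) (use that in \<open>auto simp: annihilator_def\<close>)
        then show False using big[OF that(1) \<open>z \<noteq> 0\<close>] False by linarith
      qed
      ultimately show ?thesis by (intro exI[of _ "- S"]) auto
    qed (use trivial in auto)
  next
    case False
    then obtain y where y: "y \<in> M" "y \<in> annihilator f S" "y \<noteq> 0" by blast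
    have "{i. inner y (f i) \<noteq> 0} \<subseteq> - S" using y(2) by (auto simp: annihilator_def)
    then have "card {i. inner y (f i) \<noteq> 0} \<le> card (- S)" by (rule card_mono[OF finite])
    then have "k < card (- S)" using big[OF y(1,3)] by linarith
    moreover have "z = 0" if "z \<in> M" "z \<in> annihilator f (- S)" for z
    proof -
      have "\<forall>i. inner y (f i) = 0 \<or> inner z (f i) = 0"
        using y(2) that(2) by (auto simp: annihilator_def)
      then show ?thesis using CP y(1,3) that(1) unfolding complement_property_def by blast
    qed
    ultimately show ?thesis by (intro exI[of _ "- S"]) auto
  qed
  let ?\<T> = "{T. k < card T \<and> M \<inter> annihilator f T \<subseteq> {0}}"
  obtain v where v: "v \<notin> M" "\<forall>T \<in> ?\<T>. span (insert v M) \<inter> annihilator f T \<subseteq> M"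
    using exists_extension_avoiding_annihilators[OF f M, of ?\<T>] dim_M k by auto
  let ?M' = "span (insert v M)"
  have "complement_property f ?M'"
    unfolding complement_property_def
  proof (intro ballI impI)
    fix u w assume u: "u \<in> ?M'" and w: "w \<in> ?M'"
      and compl: "\<forall>i. inner u (f i) = 0 \<or> inner w (f i) = 0"
    let ?S = "{i. inner u (f i) = 0}"
    have "u \<in> annihilator f ?S" "w \<in> annihilator f (- ?S)"
      using compl by (auto simp: annihilator_def)
    moreover obtain T where T: "T = ?S \<or> T = - ?S" "k < card T" "M \<inter> annihilator f T \<subseteq> {0}"
      using split by blast
    ultimately have "u \<in> annihilator f T \<or> w \<in> annihilator f T" by blast
    then have "u \<in> M \<inter> annihilator f T \<or> w \<in> M \<inter> annihilator f T" using u w v(2) T(2,3) by blast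
    then show "u = 0 \<or> w = 0" using T(3) by blast
  qed
  then have "PR_subspace f ?M'"
    using PR_subspace_iff_complement_property[OF f subspace_span] by blast
  moreover have "M \<subset> ?M'" using v(1) span_superset[of "insert v M"] span_base[of v] by blast
  ultimately show ?thesis unfolding maximal_PR_subspace_def by blast
qed

theorem theorem4p9:
  fixes f fs :: "'n::finite \<Rightarrow> real^'n"
  assumes "is_basis f" and "is_dual_basis f fs"
  shows
    "(\<forall>k M. k \<ge> 1 \<and> PR_subspace f M \<and> dim M = k \<longrightarrow>
        (\<forall>x\<in>M. x \<noteq> 0 \<longrightarrow> card (supp_dual fs x) \<ge> k) \<and>
        ((\<exists>x\<in>M. card (supp_dual fs x) = k) \<longrightarrow> maximal_PR_subspace f M))
   \<and> (\<forall>k x. 0 < k \<and> k \<le> (CARD('n) + 1) div 2 \<and> card (supp_dual fs x) = k \<longrightarrow>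
        (\<exists>M. subspace M \<and> dim M = k \<and> maximal_PR_subspace f M \<and> x \<in> M))
   \<and> (\<forall>k M. k \<ge> 1 \<and> k < (CARD('n) + 1) div 2 \<and> PR_subspace f M \<and> dim M = k \<longrightarrow>
        (maximal_PR_subspace f M \<longleftrightarrow> (\<exists>x\<in>M. card (supp_dual fs x) = k)))"
proof -
  have half: "k \<le> (CARD('n) + 1) div 2 \<longleftrightarrow> 2 * k \<le> CARD('n) + 1"
    "k < (CARD('n) + 1) div 2 \<longleftrightarrow> 2 * k + 1 \<le> CARD('n)" for k
    by linarith+
  show ?thesis
    unfolding supp_dual_eq[OF assms] half
  proof (intro conjI allI impI ballI iffI; elim conjE)
    show "k \<le> card {i. inner x (f i) \<noteq> 0}"
      if "PR_subspace f M" "dim M = k" "x \<in> M" "x \<noteq> 0" for k M x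
      using dim_le_card_support[OF assms(1)] that by blast
    show "\<exists>M. subspace M \<and> dim M = k \<and> maximal_PR_subspace f M \<and> x \<in> M"
      if "0 < k" "2 * k \<le> CARD('n) + 1" "card {i. inner x (f i) \<noteq> 0} = k" for k x
      using exists_maximal_PR_subspace_through[OF assms(1) that] .
    show "\<exists>x\<in>M. card {i. inner x (f i) \<noteq> 0} = k"
      if "2 * k + 1 \<le> CARD('n)" "PR_subspace f M" "dim M = k" "maximal_PR_subspace f M" for k M
      using not_maximal_PR_subspace_if_no_min_support[OF assms(1)] that by blast
  qed ((use maximal_PR_subspace_if_card_support_eq_dim[OF assms(1)] in fastforce)+)
qed

end
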